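(* Let $0<p<\infty$, $0<\alpha<\infty$, and let $\beta$ be real with $\beta p<-1$ and $\nu:=-(\alpha+\beta+\frac1p)>0$. Let $K>1$ be sufficiently large, $\delta_n=K^{-n}$, $f_n(z)=\delta_n^\nu(1+\delta_n-z)^\beta$ ($z\in\mathbb{D}$), and $X_{\nu,\beta}=\{\sum_{n=1}^\infty a_nf_n:(a_n)\in\ell_\infty\}$. Then the map $\Phi:\ell_\infty\to X_{\nu,\beta}$, $\Phi((a_n))=\sum_{n=1}^\infty a_nf_n$, is an isomorphism between $\ell_\infty$ and $X_{\nu,\beta}$ endowed with the norm of $H(p,\infty,\alpha)$; that is, $X_{\nu,\beta}\subseteq H(p,\infty,\alpha)$, $\Phi$ is a linear bijection, and there are constants $c,C>0$ with $c\|{\bf a}\|_{\ell_\infty}\le\|\Phi{\bf a}\|_{p,\infty,\alpha}\le C\|{\bf a}\|_{\ell_\infty}$ for all ${\bf a}\in\ell_\infty$.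
   Context: $\mathbb{D}$ is the unit disk; powers use the principal branch. The series converges uniformly on compact subsets of $\mathbb{D}$. $M_p(r,f)=\left(\int_0^{2\pi}|f(re^{i\theta})|^p\frac{d\theta}{2\pi}\right)^{1/p}$; $H(p,\infty,\alpha)$ is the space of analytic $f$ on $\mathbb{D}$ with $\|f\|_{p,\infty,\alpha}=\sup_{0\le r<1}(1-r)^\alpha M_p(r,f)<\infty$. *)

theory Defs
  imports "HOL-Analysis.Analysis"
begin

definition Mp :: "real \<Rightarrow> real \<Rightarrow> (complex \<Rightarrow> complex) \<Rightarrow> real" where
  "Mp p r f = ((LINT \<theta>:{0..2*pi}|lborel. norm (f (complex_of_real r * cis \<theta>)) powr p) / (2*pi)) powr (1/p)"

definition in_Hpia :: "real \<Rightarrow> real \<Rightarrow> (complex \<Rightarrow> complex) \<Rightarrow> bool" where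
  "in_Hpia p \<alpha> f \<longleftrightarrow> f analytic_on ball 0 1 \<and>
     bdd_above ((\<lambda>r. (1 - r) powr \<alpha> * Mp p r f) ` {0..<1})"

text \<open>The norm of H(p,infinity,alpha) (meaningful for f with in_Hpia p alpha f).\<close>
definition Hpia_norm :: "real \<Rightarrow> real \<Rightarrow> (complex \<Rightarrow> complex) \<Rightarrow> real" where
  "Hpia_norm p \<alpha> f = (SUP r\<in>{0..<1}. (1 - r) powr \<alpha> * Mp p r f)"

definition linf_norm :: "(nat \<Rightarrow> complex) \<Rightarrow> real" where
  "linf_norm a = (SUP n. norm (a n))"

definition fK :: "real \<Rightarrow> real \<Rightarrow> real \<Rightarrow> nat \<Rightarrow> complex \<Rightarrow> complex" where
  "fK K \<nu> \<beta> n z = complex_of_real ((K powr (- real n)) powr \<nu>) *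
      (complex_of_real (1 + K powr (- real n)) - z) powr complex_of_real \<beta>"

text \<open>Phi(a) = sum_{n>=1} a_n f_n; the sequence a is indexed from 0, a k standing for a_{k+1}.\<close>
definition PhiK :: "real \<Rightarrow> real \<Rightarrow> real \<Rightarrow> (nat \<Rightarrow> complex) \<Rightarrow> complex \<Rightarrow> complex" where
  "PhiK K \<nu> \<beta> a z = (\<Sum>k. a k * fK K \<nu> \<beta> (Suc k) z)"

end

theory Submission
  imports Defs "HOL-Complex_Analysis.Cauchy_Integral_Formula"
begin

text \<open>
  Each \<open>f\<^sub>n\<close> is concentrated at the boundary point 1 at scale \<open>\<delta>\<^sub>n\<close>: on \<open>|z| = r\<close>,
  \<open>|f\<^sub>n(re\<^sup>i\<^sup>\<theta>)| \<le> C \<delta>\<^sub>n\<^sup>\<nu> (\<delta>\<^sub>n + 1 - r + |\<theta>|)\<^sup>\<beta>\<close>. As the scales \<open>\<delta>\<^sub>n = K\<^sup>-\<^sup>n\<close> are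
  lacunary, summing over \<open>n\<close> is dominated by two geometric series (the terms with
  \<open>\<delta>\<^sub>n\<close> below and above \<open>t = 1 - r + |\<theta>|\<close>), giving
  \<open>|\<Phi>a(re\<^sup>i\<^sup>\<theta>)| \<le> C \<parallel>a\<parallel>\<^sub>\<infinity> t\<^sup>\<nu>\<^sup>+\<^sup>\<beta>\<close>; since \<open>(\<nu> + \<beta>) p = -(\<alpha> p + 1) < -1\<close>,
  integrating in \<open>\<theta>\<close> bounds \<open>(1 - r)\<^sup>\<alpha> M\<^sub>p(r, \<Phi>a)\<close> by \<open>C \<parallel>a\<parallel>\<^sub>\<infinity>\<close>.
  Conversely, pick \<open>m\<close> with \<open>|a\<^sub>m| \<ge> \<parallel>a\<parallel>\<^sub>\<infinity>/2\<close>. On the arc \<open>0 \<le> \<theta> \<le> \<delta>\<^sub>m\<close> of the circle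
  \<open>r = 1 - \<delta>\<^sub>m\<close> the \<open>m\<close>-th term has modulus at least \<open>3\<^sup>\<beta> |a\<^sub>m| \<delta>\<^sub>m\<^sup>\<nu>\<^sup>+\<^sup>\<beta>\<close>, while for \<open>K\<close>
  large all other terms together contribute at most a quarter of \<open>3\<^sup>\<beta> \<parallel>a\<parallel>\<^sub>\<infinity> \<delta>\<^sub>m\<^sup>\<nu>\<^sup>+\<^sup>\<beta>\<close>.
  The arc has length \<open>\<delta>\<^sub>m\<close>, and \<open>\<delta>\<^sub>m\<^sup>\<alpha> \<delta>\<^sub>m\<^sup>1\<^sup>/\<^sup>p \<delta>\<^sub>m\<^sup>\<nu>\<^sup>+\<^sup>\<beta> = 1\<close>, which gives the lower
  bound; injectivity of \<open>\<Phi>\<close> follows from it.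
\<close>

lemma sin_ge_cubic:
  fixes x :: real
  assumes "0 \<le> x"
  shows "x - x^3/6 \<le> sin x"
proof -
  have "\<bar>sin x - x\<bar> \<le> x^3/6"
    using Maclaurin_sin_bound[of x 3] assms by (simp add: numeral_3_eq_3 sin_coeff_def)
  thus ?thesis by linarith
qed

lemma one_minus_cos_ge_square:
  fixes x :: real
  assumes "0 \<le> x" "x \<le> pi"
  shows "x^2/8 \<le> 1 - cos x"
proof -
  have "pi \<le> 3.2" using pi_approx(2) by simp
  hence "x \<le> 3.2" using assms by linarith
  hence "x^2 \<le> 12" using assms(1) power_mono[of x "3.2" 2] by (simp add: power2_eq_square)
  hence "x/4 \<le> x/2 - (x/2)^3/6"
    using mult_left_mono[of "x^2" 12 x] assms(1) by (simp add: power3_eq_cube power2_eq_square field_simps)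
  with sin_ge_cubic[of "x/2"] assms(1) have "x/4 \<le> sin (x/2)" by simp
  hence "(x/4)^2 \<le> sin (x/2) ^ 2" using assms(1) by (intro power_mono) auto
  thus ?thesis using cos_double_sin[of "x/2"] by (simp add: power2_eq_square)
qed

lemma norm_1_minus_cis_le: "cmod (1 - cis \<theta>) \<le> \<bar>\<theta>\<bar>"
proof -
  have "(cmod (1 - cis \<theta>))^2 = (1 - cos \<theta>)^2 + (sin \<theta>)^2"
    by (simp add: cmod_power2)
  also have "\<dots> = (2 * sin (\<theta>/2))^2"
    using cos_double_sin[of "\<theta>/2"] sin_cos_squared_add[of \<theta>]
    by (simp add: power2_eq_square algebra_simps)
  also have "\<dots> \<le> \<theta>^2"
    using abs_sin_x_le_abs_x[of "\<theta>/2"] abs_le_square_iff[of "2 * sin (\<theta>/2)" \<theta>]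
    by (simp add: abs_mult)
  finally show ?thesis by (simp flip: abs_le_square_iff)
qed

lemma norm_pole_minus_circle_ge:
  fixes r d \<theta> :: real
  assumes r: "0 \<le> r" "r < 1" and d: "0 < d" "d \<le> 1" and \<theta>: "0 \<le> \<theta>" "\<theta> \<le> 2*pi"
  shows "(d + (1 - r) + min \<theta> (2*pi - \<theta>)) / 12
           \<le> cmod (complex_of_real (1 + d) - complex_of_real r * cis \<theta>)"
    (is "_ \<le> cmod ?w")
proof -
  define \<phi> where "\<phi> = min \<theta> (2*pi - \<theta>)"
  define s where "s = 1 + d - r"
  have \<phi>: "0 \<le> \<phi>" "\<phi> \<le> pi" using \<theta> unfolding \<phi>_def by auto
  have cos_eq: "cos \<theta> = cos \<phi>" unfolding \<phi>_def by (simp add: min_def)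
  have re: "Re ?w = 1 + d - r * cos \<theta>" and im: "Im ?w = - r * sin \<theta>" by simp_all
  have "(cmod ?w)^2 = (1+d)^2 - 2*(1+d)*r*cos \<theta> + r^2 * ((sin \<theta>)^2 + (cos \<theta>)^2)"
    unfolding cmod_power2 re im by (simp only: power2_eq_square algebra_simps)
  also have "\<dots> = s^2 + 2*(1+d)*r*(1 - cos \<phi>)"
    unfolding s_def cos_eq[symmetric] by (simp add: power2_eq_square algebra_simps)
  finally have norm_sq: "(cmod ?w)^2 = s^2 + 2*(1+d)*r*(1 - cos \<phi>)" .
  show ?thesis
  proof (cases "r < 1/2")
    case True
    have "1 + d - r \<le> Re ?w" using r d cos_le_one[of \<theta>] mult_left_le[of "cos \<theta>" r] by simp
    moreover have "d + (1 - r) + \<phi> \<le> 6" using \<phi> r d pi_less_4 by linarith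
    ultimately show ?thesis using True d complex_Re_le_cmod[of ?w] unfolding \<phi>_def
      by (simp add: field_simps)
  next
    case False
    have "0 \<le> d * r" using d r by simp
    hence "1 \<le> 2*(1+d)*r" using False by (simp add: algebra_simps)
    hence "1 - cos \<phi> \<le> 2*(1+d)*r*(1 - cos \<phi>)"
      using mult_right_mono[of 1 "2*(1+d)*r" "1 - cos \<phi>"] by simp
    hence "s^2 + \<phi>^2/8 \<le> (cmod ?w)^2" using norm_sq one_minus_cos_ge_square[OF \<phi>] by linarith
    moreover have "(s + \<phi>)^2 \<le> 2 * s^2 + 2 * \<phi>^2"
      using zero_le_power2[of "s - \<phi>"] by (simp add: power2_eq_square algebra_simps)
    moreover have "((s + \<phi>)/4)^2 = (s + \<phi>)^2 / 16" by (simp add: power_divide)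
    ultimately have "((s + \<phi>)/4)^2 \<le> (cmod ?w)^2" using zero_le_power2[of s] by linarith
    hence "(s + \<phi>)/4 \<le> cmod ?w" by (rule power2_le_imp_le) simp
    moreover have "(d + (1 - r) + \<phi>)/12 \<le> (s + \<phi>)/4" using r d \<phi> unfolding s_def by simp
    ultimately show ?thesis unfolding \<phi>_def by linarith
  qed
qed

lemma norm_suminf_minus_term_le:
  fixes f :: "nat \<Rightarrow> 'a::banach"
  assumes le: "\<And>n. norm (f n) \<le> g n" and g: "summable g"
  shows "norm (suminf f - f m) \<le> suminf g - g m"
proof -
  have "summable (\<lambda>n. norm (f n))" by (rule summable_comparison_test'[OF g, of 0]) (simp add: le)
  hence "summable f" by (rule summable_norm_cancel)
  hence f: "(\<lambda>n. f n - (if n = m then f n else 0)) sums (suminf f - f m)"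
    by (intro sums_diff summable_sums sums_single)
  have g': "(\<lambda>n. g n - (if n = m then g n else 0)) sums (suminf g - g m)"
    using g by (intro sums_diff summable_sums sums_single)
  have "norm (\<Sum>n. f n - (if n = m then f n else 0)) \<le> (\<Sum>n. g n - (if n = m then g n else 0))"
  proof (rule norm_suminf_le)
    show "summable (\<lambda>n. g n - (if n = m then g n else 0))" using g' by (rule sums_summable)
  qed (simp add: le)
  thus ?thesis using sums_unique[OF f] sums_unique[OF g'] by simp
qed

lemma linf_norm_ge:
  assumes "bounded (range a)"
  shows "norm (a n) \<le> linf_norm a"
proof -
  obtain M where "\<forall>x\<in>range a. norm x \<le> M" using assms unfolding bounded_iff by blast
  hence "bdd_above (range (\<lambda>n. norm (a n)))" by (intro bdd_aboveI2) auto
  thus ?thesis unfolding linf_norm_def by (rule cSUP_upper[rotated]) simp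
qed

lemma frac_le_twice:
  fixes x :: real
  assumes "0 \<le> x" "x \<le> 1/2"
  shows "x / (1 - x) \<le> 2 * x"
proof -
  have "x * (2 * x) \<le> x * 1" using assms by (intro mult_left_mono) auto
  thus ?thesis using assms by (simp add: divide_le_eq algebra_simps)
qed

lemma powr_neg_le_eventually:
  fixes s \<eta> :: real
  assumes "s < 0" and "0 < \<eta>"
  shows "\<forall>\<^sub>F K in at_top. K powr s \<le> \<eta>"
  using order_tendstoD(2)[OF tendsto_neg_powr[OF assms(1) filterlim_ident] assms(2)]
  by (auto elim: eventually_mono)

lemma bounded_range_add_scaled:
  fixes a b :: "nat \<Rightarrow> 'a::real_normed_field"
  assumes "bounded (range a)" and "bounded (range b)"
  shows "bounded (range (\<lambda>n. a n + c * b n))"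
proof -
  obtain Ma Mb where Ma: "\<And>n. norm (a n) \<le> Ma" and Mb: "\<And>n. norm (b n) \<le> Mb"
    using assms unfolding bounded_iff by (meson rangeI)
  have "norm (a n + c * b n) \<le> Ma + norm c * Mb" for n
    using norm_triangle_ineq[of "a n" "c * b n"] mult_left_mono[OF Mb[of n], of "norm c"] Ma[of n]
    by (simp add: norm_mult)
  thus ?thesis unfolding bounded_iff by blast
qed

lemma integral_endpoint_powr_le:
  fixes s q :: real
  assumes s: "0 < s" and q: "1 < q"
  defines "g \<equiv> \<lambda>\<theta>. (s + \<theta>) powr (-q) + (s + 2*pi - \<theta>) powr (-q)"
  shows "g integrable_on {0..2*pi}" and "integral {0..2*pi} g \<le> 2 * s powr (1-q) / (q-1)"
proof -
  define G where "G = (\<lambda>\<theta>. ((s + 2*pi - \<theta>) powr (1-q) - (s + \<theta>) powr (1-q)) / (q-1))"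
  have "(g has_integral (G (2*pi) - G 0)) {0..2*pi}"
  proof (rule fundamental_theorem_of_calculus)
    fix x assume "x \<in> {0..2*pi}"
    hence pos: "0 < s + x" "0 < s + 2*pi - x" using s by auto
    have d1: "((\<lambda>\<theta>. (s + \<theta>) powr (1-q)) has_real_derivative (1-q) * (s + x) powr (1 - q - of_nat 1) * 1) (at x)"
      by (rule DERIV_fun_powr) (use pos in \<open>auto intro!: derivative_eq_intros\<close>)
    have d2: "((\<lambda>\<theta>. (s + 2*pi - \<theta>) powr (1-q)) has_real_derivative
        (1-q) * (s + 2*pi - x) powr (1 - q - of_nat 1) * (-1)) (at x)"
      by (rule DERIV_fun_powr) (use pos in \<open>auto intro!: derivative_eq_intros\<close>)
    have "(G has_real_derivative ((1-q) * (s + 2*pi - x) powr (1 - q - of_nat 1) * (-1)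
        - (1-q) * (s + x) powr (1 - q - of_nat 1) * 1) / (q-1)) (at x)"
      unfolding G_def by (intro DERIV_cdivide DERIV_diff d1 d2)
    moreover have "((1-q) * (s + 2*pi - x) powr (1 - q - of_nat 1) * (-1)
        - (1-q) * (s + x) powr (1 - q - of_nat 1) * 1) / (q-1) = g x"
      unfolding g_def using q by (simp add: field_simps)
    ultimately have "(G has_real_derivative g x) (at x)" by simp
    thus "(G has_vector_derivative g x) (at x within {0..2*pi})"
      by (simp add: has_real_derivative_iff_has_vector_derivative[symmetric] has_field_derivative_at_within)
  qed (simp add: pi_ge_zero)
  moreover have "G (2*pi) - G 0 = 2 * (s powr (1-q) - (s + 2*pi) powr (1-q)) / (q-1)"
    unfolding G_def by (simp add: diff_divide_distrib[symmetric])
  moreover have "\<dots> \<le> 2 * s powr (1-q) / (q-1)" using q by (intro divide_right_mono) auto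
  ultimately show "g integrable_on {0..2*pi}" "integral {0..2*pi} g \<le> 2 * s powr (1-q) / (q-1)"
    by (auto simp: integral_unique)
qed

lemma continuous_on_circle_integrand:
  assumes "continuous_on (ball 0 1) f" and "0 \<le> r" "r < 1" and "0 < p"
  shows "continuous_on S (\<lambda>\<theta>. norm (f (complex_of_real r * cis \<theta>)) powr p)"
proof -
  have "(\<lambda>\<theta>. complex_of_real r * cis \<theta>) ` S \<subseteq> ball 0 1" using assms by (auto simp: norm_mult)
  hence "continuous_on S (\<lambda>\<theta>. f (complex_of_real r * cis \<theta>))"
    by (intro continuous_on_compose2[OF assms(1)] continuous_intros)
  thus ?thesis using assms(4) by (intro continuous_on_powr' continuous_on_norm) auto
qed

lemma Mp_eq_integral:
  assumes "continuous_on {0..2*pi} (\<lambda>\<theta>. norm (f (complex_of_real r * cis \<theta>)) powr p)"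
  shows "Mp p r f
    = (integral {0..2*pi} (\<lambda>\<theta>. norm (f (complex_of_real r * cis \<theta>)) powr p) / (2*pi)) powr (1/p)"
  unfolding Mp_def using set_borel_integral_eq_integral(2)[OF borel_integrable_atLeastAtMost'[OF assms]]
  by simp

lemma Mp_le_of_norm_le:
  fixes B s p \<alpha> :: real
  assumes cont: "continuous_on {0..2*pi} (\<lambda>\<theta>. norm (f (complex_of_real r * cis \<theta>)) powr p)"
    and p: "0 < p" and \<alpha>: "0 < \<alpha>" and s: "0 < s" and B: "0 \<le> B"
    and le: "\<And>\<theta>. 0 \<le> \<theta> \<Longrightarrow> \<theta> \<le> 2*pi \<Longrightarrow>
       norm (f (complex_of_real r * cis \<theta>)) \<le> B * (s + min \<theta> (2*pi - \<theta>)) powr (-(\<alpha> + 1/p))"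
  shows "Mp p r f \<le> B * s powr (-\<alpha>) * (1 / (\<alpha>*p*pi)) powr (1/p)"
proof -
  define q where "q = \<alpha> * p + 1"
  have q: "1 < q" using \<alpha> p by (simp add: q_def)
  define F where "F = (\<lambda>\<theta>. norm (f (complex_of_real r * cis \<theta>)) powr p)"
  define g where "g = (\<lambda>\<theta>. (s + \<theta>) powr (-q) + (s + 2*pi - \<theta>) powr (-q))"
  note g = integral_endpoint_powr_le[OF s q, folded g_def]
  have F_le: "F \<theta> \<le> B powr p * g \<theta>" if "\<theta> \<in> {0..2*pi}" for \<theta>
  proof -
    define t where "t = s + min \<theta> (2*pi - \<theta>)"
    have t: "0 < t" using that s by (auto simp: t_def min_def)
    have "F \<theta> \<le> (B * t powr (-(\<alpha> + 1/p))) powr p"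
      unfolding F_def t_def using le that p by (intro powr_mono2) auto
    also have "\<dots> = B powr p * t powr (-q)"
    proof -
      have "-(\<alpha> + 1/p) * p = -q" using p by (simp add: q_def field_simps)
      thus ?thesis using B t by (simp add: powr_mult powr_powr)
    qed
    also have "t powr (-q) \<le> g \<theta>" unfolding g_def t_def by (auto simp: min_def add_diff_eq)
    finally show ?thesis by (simp add: mult_left_mono)
  qed
  have "integral {0..2*pi} F \<le> integral {0..2*pi} (\<lambda>\<theta>. B powr p * g \<theta>)"
    using F_le integrable_on_cmult_left[OF g(1), of "B powr p"]
      integrable_continuous_interval[OF cont[folded F_def]]
    by (intro integral_le) auto
  also have "\<dots> = B powr p * integral {0..2*pi} g" by simp
  also have "\<dots> \<le> B powr p * (2 * s powr (1-q) / (q-1))" using g(2) by (rule mult_left_mono) simp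
  finally have "integral {0..2*pi} F / (2*pi) \<le> (B * s powr (-\<alpha>)) powr p * (1 / (\<alpha>*p*pi))"
    using B s p \<alpha> by (simp add: q_def powr_mult powr_powr powr_add[symmetric] field_simps)
  moreover have "0 \<le> integral {0..2*pi} F"
    using integrable_continuous_interval[OF cont[folded F_def]] by (rule integral_nonneg) (simp add: F_def)
  ultimately have "Mp p r f \<le> ((B * s powr (-\<alpha>)) powr p * (1 / (\<alpha>*p*pi))) powr (1/p)"
    unfolding Mp_eq_integral[OF cont, folded F_def] using p by (intro powr_mono2) auto
  also have "\<dots> = B * s powr (-\<alpha>) * (1 / (\<alpha>*p*pi)) powr (1/p)"
    by (subst powr_mult) (use B p \<alpha> in \<open>auto simp del: powr_mult simp: powr_powr\<close>)
  finally show ?thesis .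
qed

lemma Mp_ge_of_norm_ge_on_arc:
  fixes L e p :: real
  assumes cont: "continuous_on {0..2*pi} (\<lambda>\<theta>. norm (f (complex_of_real r * cis \<theta>)) powr p)"
    and p: "0 < p" and e: "0 < e" "e \<le> 2*pi" and L: "0 \<le> L"
    and ge: "\<And>\<theta>. 0 \<le> \<theta> \<Longrightarrow> \<theta> \<le> e \<Longrightarrow> L \<le> norm (f (complex_of_real r * cis \<theta>))"
  shows "L * (e / (2*pi)) powr (1/p) \<le> Mp p r f"
proof -
  define F where "F = (\<lambda>\<theta>. norm (f (complex_of_real r * cis \<theta>)) powr p)"
  have F: "F integrable_on {0..2*pi}" "F integrable_on {0..e}"
    using cont e by (auto simp: F_def intro!: integrable_continuous_interval elim: continuous_on_subset)
  have "e * L powr p = integral {0..e} (\<lambda>_. L powr p)" using e by simp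
  also have "\<dots> \<le> integral {0..e} F"
    using ge L p F(2) by (intro integral_le) (auto simp: F_def intro: powr_mono2)
  also have "\<dots> \<le> integral {0..2*pi} F"
    using e F by (intro integral_subset_le) (auto simp: F_def)
  finally have "(e * L powr p / (2*pi)) powr (1/p) \<le> (integral {0..2*pi} F / (2*pi)) powr (1/p)"
    using e L p by (intro powr_mono2 divide_right_mono) auto
  also have "\<dots> = Mp p r f" unfolding F_def by (rule Mp_eq_integral[OF cont, symmetric])
  also have "(e * L powr p / (2*pi)) powr (1/p) = L * (e / (2*pi)) powr (1/p)"
    using e L p by (simp add: powr_mult powr_powr powr_divide field_simps)
  finally show ?thesis .
qed

lemma Hpia_norm_eq_0:
  assumes "\<And>z. z \<in> ball 0 1 \<Longrightarrow> f z = 0" and "0 < p"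
  shows "Hpia_norm p \<alpha> f = 0"
proof -
  have "Mp p r f = 0" if "r \<in> {0..<1}" for r
  proof -
    have "(\<lambda>\<theta>. norm (f (complex_of_real r * cis \<theta>)) powr p) = (\<lambda>\<theta>. 0)"
      using assms that by (auto simp: norm_mult)
    thus ?thesis unfolding Mp_def using assms(2) by simp
  qed
  hence "(\<lambda>r. (1 - r) powr \<alpha> * Mp p r f) ` {0..<1} = {0}" by force
  thus ?thesis unfolding Hpia_norm_def by simp
qed

locale lacunary_family =
  fixes K \<nu> \<beta> :: real
  assumes K_gt_1: "1 < K" and nu_pos: "0 < \<nu>" and beta_neg: "\<beta> < 0"
    and nu_beta_neg: "\<nu> + \<beta> < 0"
begin

text \<open>\<open>\<delta> k\<close> is the paper's \<open>\<delta>\<^sub>k\<^sub>+\<^sub>1\<close>, matching the index shift in \<^const>\<open>PhiK\<close>.\<close>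
definition \<delta> :: "nat \<Rightarrow> real" where
  "\<delta> k = K powr (- real (Suc k))"

text \<open>\<open>majorant t k\<close> bounds \<open>|f\<^sub>k\<^sub>+\<^sub>1(z)|\<close> when \<open>z\<close> is at distance about \<open>t\<close> from the boundary point 1.\<close>
definition majorant :: "real \<Rightarrow> nat \<Rightarrow> real" where
  "majorant t k = \<delta> k powr \<nu> * (\<delta> k + t) powr \<beta>"

definition majorant_const :: real where
  "majorant_const = 1 / (1 - K powr (-\<nu>)) + 1 / (1 - K powr (\<nu> + \<beta>))"

lemma delta_pos: "0 < \<delta> k"
  using K_gt_1 by (simp add: \<delta>_def)

lemma delta_less_1: "\<delta> k < 1"
  unfolding \<delta>_def using K_gt_1 by (simp add: powr_less_one)

lemma delta_eq_times_power: "k \<le> m \<Longrightarrow> \<delta> k = \<delta> m * K ^ (m - k)"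
  unfolding \<delta>_def using K_gt_1
  by (simp add: powr_realpow[symmetric] powr_add[symmetric])

lemma delta_Suc: "\<delta> (Suc m) = \<delta> m / K"
  using delta_eq_times_power[of m "Suc m"] K_gt_1 by simp

lemma majorant_nonneg: "0 \<le> majorant t k"
  by (simp add: majorant_def)

lemma majorant_const_pos: "0 < majorant_const"
  unfolding majorant_const_def using K_gt_1 nu_pos nu_beta_neg
  by (auto intro!: add_pos_pos simp: powr_less_one)

lemma majorant_tail_le:
  assumes t: "0 < t" and \<rho>: "0 < \<rho>" and N: "\<delta> N \<le> \<rho> * t"
  shows "summable (\<lambda>j. majorant t (j + N))"
    and "(\<Sum>j. majorant t (j + N)) \<le> \<rho> powr \<nu> * t powr (\<nu> + \<beta>) / (1 - K powr (-\<nu>))"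
proof -
  define q where "q = K powr (-\<nu>)"
  have q: "0 < q" "q < 1" unfolding q_def using K_gt_1 nu_pos by (auto intro!: powr_less_one)
  define B where "B = \<rho> powr \<nu> * t powr (\<nu> + \<beta>)"
  have le: "majorant t (j + N) \<le> B * q^j" for j
  proof -
    have "\<delta> (j + N) powr \<nu> = \<delta> N powr \<nu> * q^j"
      using delta_eq_times_power[of N "j + N"] K_gt_1 delta_pos[of N] delta_pos[of "j + N"]
      unfolding q_def
      by (simp add: powr_mult powr_realpow[symmetric] powr_powr powr_minus field_simps)
    also have "\<delta> N powr \<nu> \<le> (\<rho> * t) powr \<nu>"
      using N delta_pos nu_pos by (intro powr_mono2) (auto intro: less_imp_le)
    finally have "\<delta> (j + N) powr \<nu> \<le> (\<rho> * t) powr \<nu> * q^j" using q by (simp add: mult_right_mono)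
    moreover have "(\<delta> (j + N) + t) powr \<beta> \<le> t powr \<beta>"
      using delta_pos[of "j + N"] t beta_neg by (intro powr_mono2') auto
    ultimately have "majorant t (j + N) \<le> (\<rho> * t) powr \<nu> * q^j * t powr \<beta>"
      unfolding majorant_def using q by (intro mult_mono) auto
    also have "\<dots> = B * q^j" unfolding B_def using \<rho> t by (simp add: powr_mult powr_add)
    finally show ?thesis .
  qed
  have geom: "summable (\<lambda>j. B * q^j)" using q by (intro summable_mult summable_geometric) auto
  show sum: "summable (\<lambda>j. majorant t (j + N))"
    by (rule summable_comparison_test'[OF geom, of 0]) (use le majorant_nonneg in auto)
  have "(\<Sum>j. majorant t (j + N)) \<le> (\<Sum>j. B * q^j)" by (rule suminf_le[OF le sum geom])
  also have "\<dots> = B / (1 - q)" using q by (simp add: suminf_mult suminf_geometric divide_inverse)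
  finally show "(\<Sum>j. majorant t (j + N)) \<le> \<rho> powr \<nu> * t powr (\<nu> + \<beta>) / (1 - K powr (-\<nu>))"
    unfolding B_def q_def .
qed

lemma majorant_head_le:
  assumes t: "0 < t" and c: "0 < c" and N: "\<And>k. k < N \<Longrightarrow> c * t * K^(N - Suc k) \<le> \<delta> k"
  shows "(\<Sum>k<N. majorant t k) \<le> c powr (\<nu> + \<beta>) * t powr (\<nu> + \<beta>) / (1 - K powr (\<nu> + \<beta>))"
proof -
  define q where "q = K powr (\<nu> + \<beta>)"
  have q: "0 < q" "q < 1" unfolding q_def using K_gt_1 nu_beta_neg by (auto intro!: powr_less_one)
  define B where "B = c powr (\<nu> + \<beta>) * t powr (\<nu> + \<beta>)"
  have le: "majorant t k \<le> B * q^(N - Suc k)" if k: "k < N" for k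
  proof -
    have "majorant t k \<le> \<delta> k powr \<nu> * \<delta> k powr \<beta>"
      unfolding majorant_def using delta_pos t beta_neg
      by (intro mult_left_mono powr_mono2') auto
    also have "\<dots> = \<delta> k powr (\<nu> + \<beta>)" by (simp add: powr_add)
    also have "\<dots> \<le> (c * t * K^(N - Suc k)) powr (\<nu> + \<beta>)"
      using N[OF k] c t K_gt_1 nu_beta_neg by (intro powr_mono2') auto
    also have "\<dots> = B * q^(N - Suc k)" unfolding B_def q_def using c t K_gt_1
      by (simp add: powr_mult powr_powr mult.commute flip: powr_realpow)
    finally show ?thesis .
  qed
  have "(\<Sum>k<N. majorant t k) \<le> (\<Sum>k<N. B * q^(N - Suc k))"
    by (rule sum_mono) (use le in auto)
  also have "\<dots> = B * (\<Sum>i<N. q^i)"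
    by (simp add: sum_distrib_left[symmetric] sum.nat_diff_reindex[where g="\<lambda>i. q^i"])
  also have "\<dots> \<le> B * (1 / (1 - q))"
    using q by (intro mult_left_mono) (auto simp: B_def sum_gp_strict divide_right_mono)
  finally show ?thesis unfolding B_def q_def by simp
qed

lemma exists_first_delta_le:
  assumes t: "0 < t"
  obtains N where "\<delta> N \<le> t" and "\<And>k. k < N \<Longrightarrow> t < \<delta> k"
proof -
  obtain n where n: "1/t < K^n" using real_arch_pow[OF K_gt_1] by blast
  have "\<delta> n = 1 / K^(Suc n)"
    unfolding \<delta>_def powr_minus_divide using K_gt_1 by (subst powr_realpow) auto
  also have "\<dots> \<le> 1 / K^n" using K_gt_1 by (intro divide_left_mono) auto
  also have "\<dots> < t" using n t K_gt_1 by (simp add: divide_less_eq mult.commute)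
  finally have ex: "\<exists>n. \<delta> n \<le> t" by (blast intro: less_imp_le)
  show ?thesis
  proof (rule that)
    show "\<delta> (LEAST n. \<delta> n \<le> t) \<le> t" by (rule LeastI_ex[OF ex])
    show "t < \<delta> k" if "k < (LEAST n. \<delta> n \<le> t)" for k using not_less_Least[OF that] by simp
  qed
qed

lemma majorant_summable_and_le:
  assumes t: "0 < t"
  shows "summable (majorant t)" and "suminf (majorant t) \<le> majorant_const * t powr (\<nu> + \<beta>)"
proof -
  obtain N where N: "\<delta> N \<le> t" "\<And>k. k < N \<Longrightarrow> t < \<delta> k" using exists_first_delta_le[OF t] by blast
  have "\<delta> N \<le> 1 * t" using N(1) by simp
  note tail = majorant_tail_le[OF t zero_less_one this]
  have "1 * t * K^(N - Suc k) \<le> \<delta> k" if k: "k < N" for k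
  proof -
    have "t \<le> \<delta> (N - 1)" using N(2)[of "N - 1"] k by simp
    hence "t * K^(N - Suc k) \<le> \<delta> (N - 1) * K^(N - Suc k)" using K_gt_1 by (intro mult_right_mono) auto
    also have "\<dots> = \<delta> k" using k delta_eq_times_power[of k "N - 1"] by simp
    finally show ?thesis by simp
  qed
  note head = majorant_head_le[OF t zero_less_one this]
  show sum: "summable (majorant t)" using tail(1) summable_iff_shift by blast
  have "suminf (majorant t) = (\<Sum>j. majorant t (j + N)) + (\<Sum>k<N. majorant t k)"
    by (rule suminf_split_initial_segment[OF sum])
  moreover have "majorant_const * t powr (\<nu> + \<beta>)
      = t powr (\<nu> + \<beta>) / (1 - K powr (-\<nu>)) + t powr (\<nu> + \<beta>) / (1 - K powr (\<nu> + \<beta>))"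
    unfolding majorant_const_def by (simp add: distrib_right)
  ultimately show "suminf (majorant t) \<le> majorant_const * t powr (\<nu> + \<beta>)"
    using tail(2) head by simp
qed

lemma majorant_off_diagonal_le:
  "suminf (majorant (\<delta> m)) - majorant (\<delta> m) m
     \<le> \<delta> m powr (\<nu> + \<beta>) * (K powr (-\<nu>) / (1 - K powr (-\<nu>)) + K powr (\<nu> + \<beta>) / (1 - K powr (\<nu> + \<beta>)))"
proof -
  have t: "0 < \<delta> m" by (rule delta_pos)
  have "\<delta> (Suc m) \<le> 1/K * \<delta> m" using delta_Suc by simp
  from majorant_tail_le(2)[OF t _ this] K_gt_1
  have "(\<Sum>j. majorant (\<delta> m) (j + Suc m)) \<le> (1/K) powr \<nu> * \<delta> m powr (\<nu> + \<beta>) / (1 - K powr (-\<nu>))"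
    by simp
  also have "(1/K) powr \<nu> = K powr (-\<nu>)" using K_gt_1 by (simp add: powr_divide powr_minus_divide)
  finally have tail: "(\<Sum>j. majorant (\<delta> m) (j + Suc m))
      \<le> K powr (-\<nu>) * \<delta> m powr (\<nu> + \<beta>) / (1 - K powr (-\<nu>))" .
  have N: "K * \<delta> m * K^(m - Suc k) \<le> \<delta> k" if "k < m" for k
  proof -
    have "\<delta> k = \<delta> m * K^(m - k)" using that by (intro delta_eq_times_power) simp
    also have "m - k = Suc (m - Suc k)" using that by simp
    finally show ?thesis by (simp only: power_Suc mult_ac order_refl)
  qed
  have head: "(\<Sum>k<m. majorant (\<delta> m) k)
      \<le> K powr (\<nu> + \<beta>) * \<delta> m powr (\<nu> + \<beta>) / (1 - K powr (\<nu> + \<beta>))"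
    using majorant_head_le[OF t _ N] K_gt_1 by simp
  have "suminf (majorant (\<delta> m))
      = (\<Sum>j. majorant (\<delta> m) (j + Suc m)) + (\<Sum>k<m. majorant (\<delta> m) k) + majorant (\<delta> m) m"
    using suminf_split_initial_segment[OF majorant_summable_and_le(1)[OF t], of "Suc m"] by simp
  moreover have "\<delta> m powr (\<nu> + \<beta>) * (K powr (-\<nu>) / (1 - K powr (-\<nu>)) + K powr (\<nu> + \<beta>) / (1 - K powr (\<nu> + \<beta>)))
      = K powr (-\<nu>) * \<delta> m powr (\<nu> + \<beta>) / (1 - K powr (-\<nu>))
        + K powr (\<nu> + \<beta>) * \<delta> m powr (\<nu> + \<beta>) / (1 - K powr (\<nu> + \<beta>))"
    by (simp only: distrib_left times_divide_eq_right mult.commute)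
  ultimately show ?thesis using tail head by linarith
qed

lemma fK_Suc_eq:
  "fK K \<nu> \<beta> (Suc k) z
     = complex_of_real (\<delta> k powr \<nu>) * (complex_of_real (1 + \<delta> k) - z) powr complex_of_real \<beta>"
  by (simp add: fK_def \<delta>_def)

lemma norm_fK_Suc:
  "norm (fK K \<nu> \<beta> (Suc k) z) = \<delta> k powr \<nu> * cmod (complex_of_real (1 + \<delta> k) - z) powr \<beta>"
  unfolding fK_Suc_eq norm_mult norm_of_real by (simp add: norm_powr_real_powr')

lemma norm_fK_le_majorant:
  assumes "norm z \<le> R" and "R < 1"
  shows "norm (fK K \<nu> \<beta> (Suc k) z) \<le> majorant (1 - R) k"
proof -
  have "0 < 1 + \<delta> k" using delta_pos[of k] by simp
  hence "norm (complex_of_real (1 + \<delta> k)) = 1 + \<delta> k" by (simp only: norm_of_real abs_of_pos)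
  hence "\<delta> k + (1 - R) \<le> cmod (complex_of_real (1 + \<delta> k) - z)"
    using assms norm_triangle_ineq2[of "complex_of_real (1 + \<delta> k)" z] by linarith
  hence "cmod (complex_of_real (1 + \<delta> k) - z) powr \<beta> \<le> (\<delta> k + (1 - R)) powr \<beta>"
    using assms delta_pos[of k] beta_neg by (intro powr_mono2') auto
  thus ?thesis unfolding norm_fK_Suc majorant_def by (intro mult_left_mono) auto
qed

lemma norm_fK_le_majorant_on_circle:
  assumes r: "0 \<le> r" "r < 1" and \<theta>: "0 \<le> \<theta>" "\<theta> \<le> 2*pi"
  shows "norm (fK K \<nu> \<beta> (Suc k) (complex_of_real r * cis \<theta>))
           \<le> 12 powr (-\<beta>) * majorant ((1 - r) + min \<theta> (2*pi - \<theta>)) k"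
proof -
  define t where "t = (1 - r) + min \<theta> (2*pi - \<theta>)"
  have t: "0 < t" using r \<theta> by (simp add: t_def)
  have "(\<delta> k + t) / 12 \<le> cmod (complex_of_real (1 + \<delta> k) - complex_of_real r * cis \<theta>)"
    using norm_pole_minus_circle_ge[OF r delta_pos less_imp_le[OF delta_less_1] \<theta>]
    unfolding t_def by (simp add: add.assoc)
  hence "cmod (complex_of_real (1 + \<delta> k) - complex_of_real r * cis \<theta>) powr \<beta> \<le> ((\<delta> k + t) / 12) powr \<beta>"
    using delta_pos[of k] t beta_neg by (intro powr_mono2') auto
  also have "\<dots> = 12 powr (-\<beta>) * (\<delta> k + t) powr \<beta>"
    using delta_pos[of k] t by (simp add: powr_divide powr_minus_divide)
  finally have "norm (fK K \<nu> \<beta> (Suc k) (complex_of_real r * cis \<theta>))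
      \<le> \<delta> k powr \<nu> * (12 powr (-\<beta>) * (\<delta> k + t) powr \<beta>)"
    unfolding norm_fK_Suc by (intro mult_left_mono) auto
  thus ?thesis unfolding majorant_def t_def by (simp only: mult.left_commute)
qed

lemma norm_fK_ge_on_arc:
  assumes \<theta>: "0 \<le> \<theta>" "\<theta> \<le> \<delta> m"
  shows "3 powr \<beta> * \<delta> m powr (\<nu> + \<beta>)
           \<le> norm (fK K \<nu> \<beta> (Suc m) (complex_of_real (1 - \<delta> m) * cis \<theta>))"
proof -
  define e where "e = \<delta> m"
  have e: "0 < e" "e < 1" unfolding e_def using delta_pos delta_less_1 by auto
  define w where "w = complex_of_real (1 + e) - complex_of_real (1 - e) * cis \<theta>"
  have "norm (complex_of_real (1 + e)) = 1 + e" and "norm (complex_of_real (1 - e) * cis \<theta>) = 1 - e"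
    unfolding norm_mult norm_of_real norm_cis using e by simp_all
  hence lower: "2 * e \<le> cmod w"
    using norm_triangle_ineq2[of "complex_of_real (1 + e)" "complex_of_real (1 - e) * cis \<theta>"]
    unfolding w_def by linarith
  have "w = complex_of_real (2 * e) + complex_of_real (1 - e) * (1 - cis \<theta>)"
    unfolding w_def by (simp add: algebra_simps)
  hence "cmod w \<le> cmod (complex_of_real (2 * e)) + cmod (complex_of_real (1 - e) * (1 - cis \<theta>))"
    by (simp only: norm_triangle_ineq)
  also have "\<dots> = 2 * e + (1 - e) * cmod (1 - cis \<theta>)"
    using e unfolding norm_mult norm_of_real by simp
  also have "(1 - e) * cmod (1 - cis \<theta>) \<le> 1 * \<theta>"
    using e \<theta> norm_1_minus_cis_le[of \<theta>] by (intro mult_mono) auto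
  finally have "cmod w \<le> 3 * e" using \<theta> unfolding e_def by simp
  hence "(3 * e) powr \<beta> \<le> cmod w powr \<beta>" using lower e beta_neg by (intro powr_mono2') auto
  hence "e powr \<nu> * (3 * e) powr \<beta> \<le> norm (fK K \<nu> \<beta> (Suc m) (complex_of_real (1 - e) * cis \<theta>))"
    unfolding norm_fK_Suc w_def e_def by (intro mult_left_mono) auto
  moreover have "e powr \<nu> * (3 * e) powr \<beta> = 3 powr \<beta> * e powr (\<nu> + \<beta>)"
    using e by (simp add: powr_mult powr_add)
  ultimately show ?thesis unfolding e_def by simp
qed

lemma holomorphic_fK: "fK K \<nu> \<beta> (Suc k) holomorphic_on ball 0 1"
proof -
  have "(\<lambda>z. complex_of_real (\<delta> k powr \<nu>) * (complex_of_real (1 + \<delta> k) - z) powr complex_of_real \<beta>)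
          holomorphic_on ball 0 1"
  proof (intro holomorphic_intros)
    fix z :: complex assume "z \<in> ball 0 1"
    hence "0 < Re (complex_of_real (1 + \<delta> k) - z)"
      using complex_Re_le_cmod[of z] delta_pos[of k] by simp
    thus "complex_of_real (1 + \<delta> k) - z \<notin> \<real>\<^sub>\<le>\<^sub>0" by (auto simp: complex_nonpos_Reals_iff)
  qed
  thus ?thesis by (simp add: fK_Suc_eq[abs_def])
qed

lemma norm_PhiK_term_le:
  assumes A: "\<And>k. norm (a k) \<le> A" and z: "norm z \<le> R" "R < 1"
  shows "norm (a k * fK K \<nu> \<beta> (Suc k) z) \<le> A * majorant (1 - R) k"
  unfolding norm_mult using A[of k] norm_fK_le_majorant[OF z]
  by (intro mult_mono) (auto intro: order_trans[OF norm_ge_zero A])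

lemma summable_norm_PhiK_terms:
  assumes A: "\<And>k. norm (a k) \<le> A" and z: "norm z < 1"
  shows "summable (\<lambda>k. norm (a k * fK K \<nu> \<beta> (Suc k) z))"
proof (rule summable_comparison_test'[of "\<lambda>k. A * majorant (1 - norm z) k" 0])
  show "summable (\<lambda>k. A * majorant (1 - norm z) k)"
    using majorant_summable_and_le(1)[of "1 - norm z"] z by (intro summable_mult) simp
qed (use norm_PhiK_term_le[OF A order_refl z] in simp)

lemma summable_PhiK_terms:
  assumes "bounded (range a)" and "z \<in> ball 0 1"
  shows "summable (\<lambda>k. a k * fK K \<nu> \<beta> (Suc k) z)"
proof -
  have z: "norm z < 1" using assms(2) by simp
  show ?thesis by (rule summable_norm_cancel[OF summable_norm_PhiK_terms[OF linf_norm_ge[OF assms(1)] z]])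
qed

lemma PhiK_add_scaled:
  assumes "bounded (range a)" and "bounded (range b)" and z: "z \<in> ball 0 1"
  shows "PhiK K \<nu> \<beta> (\<lambda>n. a n + c * b n) z = PhiK K \<nu> \<beta> a z + c * PhiK K \<nu> \<beta> b z"
proof -
  have sa: "summable (\<lambda>k. a k * fK K \<nu> \<beta> (Suc k) z)" by (rule summable_PhiK_terms[OF assms(1) z])
  have sb: "summable (\<lambda>k. c * (b k * fK K \<nu> \<beta> (Suc k) z))"
    by (rule summable_mult[OF summable_PhiK_terms[OF assms(2) z]])
  have "PhiK K \<nu> \<beta> (\<lambda>n. a n + c * b n) z
      = (\<Sum>k. a k * fK K \<nu> \<beta> (Suc k) z + c * (b k * fK K \<nu> \<beta> (Suc k) z))"
    unfolding PhiK_def by (simp add: algebra_simps)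
  also have "\<dots> = PhiK K \<nu> \<beta> a z + (\<Sum>k. c * (b k * fK K \<nu> \<beta> (Suc k) z))"
    unfolding PhiK_def by (rule suminf_add[OF sa sb, symmetric])
  also have "(\<Sum>k. c * (b k * fK K \<nu> \<beta> (Suc k) z)) = c * PhiK K \<nu> \<beta> b z"
    unfolding PhiK_def by (rule suminf_mult[OF summable_PhiK_terms[OF assms(2) z]])
  finally show ?thesis .
qed

lemma holomorphic_PhiK:
  assumes A: "\<And>k. norm (a k) \<le> A"
  shows "PhiK K \<nu> \<beta> a holomorphic_on ball 0 1"
proof (rule holomorphic_uniform_sequence[where f="\<lambda>n z. \<Sum>k<n. a k * fK K \<nu> \<beta> (Suc k) z"])
  fix n show "(\<lambda>z. \<Sum>k<n. a k * fK K \<nu> \<beta> (Suc k) z) holomorphic_on ball 0 1"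
    by (intro holomorphic_intros holomorphic_fK)
next
  fix x :: complex assume x: "x \<in> ball 0 1"
  define d where "d = (1 - norm x) / 2"
  have d: "0 < d" and R: "norm x + d < 1" using x by (simp_all add: d_def field_simps)
  have near: "norm y \<le> norm x + d" if "y \<in> cball x d" for y
    using that norm_triangle_ineq2[of y x] by (simp add: dist_norm norm_minus_commute)
  have "uniform_limit (cball x d) (\<lambda>n z. \<Sum>k<n. a k * fK K \<nu> \<beta> (Suc k) z) (PhiK K \<nu> \<beta> a) sequentially"
    unfolding PhiK_def
  proof (rule Weierstrass_m_test)
    show "summable (\<lambda>k. A * majorant (1 - (norm x + d)) k)"
      using majorant_summable_and_le(1)[of "1 - (norm x + d)"] R by (intro summable_mult) simp
  qed (use norm_PhiK_term_le[OF A near R] in simp)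
  moreover have "cball x d \<subseteq> ball 0 1" using near R by fastforce
  ultimately show "\<exists>d. 0 < d \<and> cball x d \<subseteq> ball 0 1 \<and>
      uniform_limit (cball x d) (\<lambda>n z. \<Sum>k<n. a k * fK K \<nu> \<beta> (Suc k) z) (PhiK K \<nu> \<beta> a) sequentially"
    using d by blast
qed simp

lemma norm_PhiK_le_on_circle:
  assumes A: "\<And>k. norm (a k) \<le> A" and r: "0 \<le> r" "r < 1" and \<theta>: "0 \<le> \<theta>" "\<theta> \<le> 2*pi"
  shows "norm (PhiK K \<nu> \<beta> a (complex_of_real r * cis \<theta>))
           \<le> A * 12 powr (-\<beta>) * majorant_const * ((1 - r) + min \<theta> (2*pi - \<theta>)) powr (\<nu> + \<beta>)"
proof -
  define t where "t = (1 - r) + min \<theta> (2*pi - \<theta>)"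
  have t: "0 < t" using r \<theta> by (simp add: t_def)
  have A0: "0 \<le> A" using order_trans[OF norm_ge_zero A] .
  note maj = majorant_summable_and_le[OF t]
  have "norm (PhiK K \<nu> \<beta> a (complex_of_real r * cis \<theta>)) \<le> (\<Sum>k. A * 12 powr (-\<beta>) * majorant t k)"
    unfolding PhiK_def
  proof (rule norm_suminf_le)
    fix k
    show "norm (a k * fK K \<nu> \<beta> (Suc k) (complex_of_real r * cis \<theta>)) \<le> A * 12 powr (-\<beta>) * majorant t k"
      unfolding norm_mult mult.assoc t_def
      using A[of k] norm_fK_le_majorant_on_circle[OF r \<theta>, of k] A0 by (intro mult_mono) auto
  qed (intro summable_mult maj(1))
  also have "\<dots> = A * 12 powr (-\<beta>) * suminf (majorant t)" by (rule suminf_mult[OF maj(1)])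
  also have "\<dots> \<le> A * 12 powr (-\<beta>) * (majorant_const * t powr (\<nu> + \<beta>))"
    using maj(2) A0 by (intro mult_left_mono) auto
  finally show ?thesis unfolding t_def by (simp add: mult.assoc)
qed

lemma off_diagonal_factor_le:
  assumes "K powr (-\<nu>) \<le> 3 powr \<beta> / 16" and "K powr (\<nu> + \<beta>) \<le> 3 powr \<beta> / 16"
  shows "K powr (-\<nu>) / (1 - K powr (-\<nu>)) + K powr (\<nu> + \<beta>) / (1 - K powr (\<nu> + \<beta>)) \<le> 3 powr \<beta> / 4"
proof -
  have "3 powr \<beta> \<le> 1" using beta_neg powr_mono[of \<beta> 0 3] by simp
  hence "K powr (-\<nu>) / (1 - K powr (-\<nu>)) \<le> 2 * K powr (-\<nu>)"
    and "K powr (\<nu> + \<beta>) / (1 - K powr (\<nu> + \<beta>)) \<le> 2 * K powr (\<nu> + \<beta>)"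
    using assms by (auto intro!: frac_le_twice)
  thus ?thesis using assms by linarith
qed

lemma norm_PhiK_ge_on_arc:
  assumes large: "K powr (-\<nu>) \<le> 3 powr \<beta> / 16" "K powr (\<nu> + \<beta>) \<le> 3 powr \<beta> / 16"
    and A: "\<And>k. norm (a k) \<le> A" and am: "A \<le> 2 * norm (a m)" and \<theta>: "0 \<le> \<theta>" "\<theta> \<le> \<delta> m"
  shows "A * (3 powr \<beta> / 4) * \<delta> m powr (\<nu> + \<beta>)
           \<le> norm (PhiK K \<nu> \<beta> a (complex_of_real (1 - \<delta> m) * cis \<theta>))"
proof -
  define z where "z = complex_of_real (1 - \<delta> m) * cis \<theta>"
  define g where "g k = a k * fK K \<nu> \<beta> (Suc k) z" for k
  have A0: "0 \<le> A" using order_trans[OF norm_ge_zero A] .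
  have "norm z = 1 - \<delta> m"
    unfolding z_def norm_mult norm_of_real norm_cis using delta_less_1[of m] by simp
  hence g_le: "norm (g k) \<le> A * majorant (\<delta> m) k" for k
    using norm_PhiK_term_le[OF A, where z=z and R="1 - \<delta> m" and k=k] delta_pos[of m]
    unfolding g_def by simp
  note maj = majorant_summable_and_le(1)[OF delta_pos[of m]]
  have "norm (PhiK K \<nu> \<beta> a z - g m) \<le> (\<Sum>k. A * majorant (\<delta> m) k) - A * majorant (\<delta> m) m"
    unfolding PhiK_def g_def[symmetric] by (rule norm_suminf_minus_term_le[OF g_le summable_mult[OF maj]])
  also have "\<dots> = A * (suminf (majorant (\<delta> m)) - majorant (\<delta> m) m)"
    using suminf_mult[OF maj, of A] by (simp add: right_diff_distrib)
  also have "\<dots> \<le> A * (\<delta> m powr (\<nu> + \<beta>) * (3 powr \<beta> / 4))"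
    using order_trans[OF majorant_off_diagonal_le[of m]
        mult_left_mono[OF off_diagonal_factor_le[OF large], of "\<delta> m powr (\<nu> + \<beta>)"]] A0
    by (intro mult_left_mono) auto
  finally have rest: "norm (PhiK K \<nu> \<beta> a z - g m) \<le> A * (3 powr \<beta> / 4) * \<delta> m powr (\<nu> + \<beta>)"
    by (simp add: mult_ac)
  have "A / 2 * (3 powr \<beta> * \<delta> m powr (\<nu> + \<beta>)) \<le> norm (g m)"
    unfolding g_def norm_mult z_def using am norm_fK_ge_on_arc[OF \<theta>] by (intro mult_mono) auto
  moreover have "norm (g m) \<le> norm (PhiK K \<nu> \<beta> a z) + norm (PhiK K \<nu> \<beta> a z - g m)"
    using norm_triangle_sub[of "g m" "PhiK K \<nu> \<beta> a z"] by (simp add: norm_minus_commute)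
  ultimately show ?thesis using rest unfolding z_def by (simp add: field_simps)
qed

end

locale lacunary_Hpia = lacunary_family +
  fixes p \<alpha> :: real
  assumes p_pos: "0 < p" and alpha_pos: "0 < \<alpha>" and nu_eq: "\<nu> = - (\<alpha> + \<beta> + 1 / p)"
begin

lemma nu_beta_eq: "\<nu> + \<beta> = - (\<alpha> + 1 / p)"
  using nu_eq by simp

lemma continuous_on_PhiK_circle_integrand:
  assumes "\<And>k. norm (a k) \<le> A" and "0 \<le> r" "r < 1"
  shows "continuous_on S (\<lambda>\<theta>. norm (PhiK K \<nu> \<beta> a (complex_of_real r * cis \<theta>)) powr p)"
  using holomorphic_on_imp_continuous_on[OF holomorphic_PhiK[OF assms(1)]] assms(2,3) p_pos
  by (rule continuous_on_circle_integrand)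

lemma weighted_Mp_PhiK_le:
  assumes A: "\<And>k. norm (a k) \<le> A" and r: "0 \<le> r" "r < 1"
  shows "(1 - r) powr \<alpha> * Mp p r (PhiK K \<nu> \<beta> a)
           \<le> A * (12 powr (-\<beta>) * majorant_const * (1 / (\<alpha>*p*pi)) powr (1/p))"
proof -
  define B where "B = A * 12 powr (-\<beta>) * majorant_const"
  have B: "0 \<le> B"
    unfolding B_def using order_trans[OF norm_ge_zero A] majorant_const_pos by simp
  have s: "0 < 1 - r" using r by simp
  have "Mp p r (PhiK K \<nu> \<beta> a) \<le> B * (1 - r) powr (-\<alpha>) * (1 / (\<alpha>*p*pi)) powr (1/p)"
    using continuous_on_PhiK_circle_integrand[OF A r] p_pos alpha_pos s B
  proof (rule Mp_le_of_norm_le)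
    fix \<theta> assume "0 \<le> \<theta>" "\<theta> \<le> 2*pi"
    from norm_PhiK_le_on_circle[OF A r this]
    show "norm (PhiK K \<nu> \<beta> a (complex_of_real r * cis \<theta>))
            \<le> B * (1 - r + min \<theta> (2*pi - \<theta>)) powr (-(\<alpha> + 1/p))"
      unfolding B_def nu_beta_eq .
  qed
  hence "(1 - r) powr \<alpha> * Mp p r (PhiK K \<nu> \<beta> a)
      \<le> (1 - r) powr \<alpha> * (B * (1 - r) powr (-\<alpha>) * (1 / (\<alpha>*p*pi)) powr (1/p))"
    by (rule mult_left_mono) simp
  also have "\<dots> = B * (1 / (\<alpha>*p*pi)) powr (1/p)" using s by (simp add: powr_minus field_simps)
  finally show ?thesis unfolding B_def by (simp add: mult_ac)
qed

lemma weighted_Mp_PhiK_ge: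
  assumes large: "K powr (-\<nu>) \<le> 3 powr \<beta> / 16" "K powr (\<nu> + \<beta>) \<le> 3 powr \<beta> / 16"
    and A: "\<And>k. norm (a k) \<le> A" and am: "A \<le> 2 * norm (a m)"
  shows "A * (3 powr \<beta> / 4 * (1 / (2*pi)) powr (1/p)) \<le> \<delta> m powr \<alpha> * Mp p (1 - \<delta> m) (PhiK K \<nu> \<beta> a)"
proof -
  define e where "e = \<delta> m"
  have e: "0 < e" "e < 1" unfolding e_def using delta_pos delta_less_1 by auto
  define L where "L = A * (3 powr \<beta> / 4) * e powr (\<nu> + \<beta>)"
  have L: "0 \<le> L" unfolding L_def using order_trans[OF norm_ge_zero A] by simp
  have r: "0 \<le> 1 - e" "1 - e < 1" using e by auto
  have "L * (e / (2*pi)) powr (1/p) \<le> Mp p (1 - e) (PhiK K \<nu> \<beta> a)"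
    using continuous_on_PhiK_circle_integrand[OF A r] p_pos e(1)
  proof (rule Mp_ge_of_norm_ge_on_arc)
    show "e \<le> 2*pi" using e pi_gt3 by linarith
    show "L \<le> norm (PhiK K \<nu> \<beta> a (complex_of_real (1 - e) * cis \<theta>))" if "0 \<le> \<theta>" "\<theta> \<le> e" for \<theta>
      using norm_PhiK_ge_on_arc[where a=a and A=A and m=m, OF large A am that[unfolded e_def]]
      unfolding L_def e_def .
  qed (use e L in auto)
  hence mono: "e powr \<alpha> * (L * (e / (2*pi)) powr (1/p)) \<le> e powr \<alpha> * Mp p (1 - e) (PhiK K \<nu> \<beta> a)"
    by (rule mult_left_mono) simp
  have "(e / (2*pi)) powr (1/p) = e powr (1/p) * (1 / (2*pi)) powr (1/p)"
    by (subst powr_mult[symmetric]) (use e in auto)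
  hence "e powr \<alpha> * (L * (e / (2*pi)) powr (1/p))
      = A * (3 powr \<beta> / 4 * (1 / (2*pi)) powr (1/p)) * (e powr \<alpha> * e powr (1/p) * e powr (\<nu> + \<beta>))"
    unfolding L_def by (simp only: mult_ac)
  also have "e powr \<alpha> * e powr (1/p) * e powr (\<nu> + \<beta>) = 1"
    unfolding nu_beta_eq using e by (simp flip: powr_add)
  finally show ?thesis using mono unfolding e_def by simp
qed

definition upper_const :: real where
  "upper_const = 12 powr (-\<beta>) * majorant_const * (1 / (\<alpha>*p*pi)) powr (1/p)"

definition lower_const :: real where
  "lower_const = 3 powr \<beta> / 4 * (1 / (2*pi)) powr (1/p)"

lemma upper_const_pos: "0 < upper_const"
  unfolding upper_const_def using majorant_const_pos p_pos alpha_pos by simp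

lemma lower_const_pos: "0 < lower_const"
  unfolding lower_const_def using p_pos by simp

lemma bdd_above_weighted_Mp_PhiK:
  assumes "bounded (range a)"
  shows "bdd_above ((\<lambda>r. (1 - r) powr \<alpha> * Mp p r (PhiK K \<nu> \<beta> a)) ` {0..<1})"
  using weighted_Mp_PhiK_le[OF linf_norm_ge[OF assms]] by (intro bdd_aboveI2) auto

lemma in_Hpia_PhiK:
  assumes "bounded (range a)"
  shows "in_Hpia p \<alpha> (PhiK K \<nu> \<beta> a)"
  unfolding in_Hpia_def analytic_on_open[OF open_ball]
  using holomorphic_PhiK[where a=a, OF linf_norm_ge[OF assms]] bdd_above_weighted_Mp_PhiK[OF assms] by blast

lemma Hpia_norm_PhiK_le:
  assumes "bounded (range a)"
  shows "Hpia_norm p \<alpha> (PhiK K \<nu> \<beta> a) \<le> upper_const * linf_norm a"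
  unfolding Hpia_norm_def upper_const_def
  using weighted_Mp_PhiK_le[OF linf_norm_ge[OF assms]] by (intro cSUP_least) (auto simp: mult_ac)

lemma Hpia_norm_PhiK_ge:
  assumes large: "K powr (-\<nu>) \<le> 3 powr \<beta> / 16" "K powr (\<nu> + \<beta>) \<le> 3 powr \<beta> / 16"
    and a: "bounded (range a)"
  shows "lower_const * linf_norm a \<le> Hpia_norm p \<alpha> (PhiK K \<nu> \<beta> a)"
proof -
  define A where "A = linf_norm a"
  have A: "\<And>k. norm (a k) \<le> A" unfolding A_def by (rule linf_norm_ge[OF a])
  have sup: "(1 - r) powr \<alpha> * Mp p r (PhiK K \<nu> \<beta> a) \<le> Hpia_norm p \<alpha> (PhiK K \<nu> \<beta> a)"
    if "0 \<le> r" "r < 1" for r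
    unfolding Hpia_norm_def using that by (intro cSUP_upper bdd_above_weighted_Mp_PhiK[OF a]) auto
  show ?thesis
  proof (cases "A = 0")
    case True
    have "0 \<le> (1 - 0) powr \<alpha> * Mp p 0 (PhiK K \<nu> \<beta> a)" by (simp add: Mp_def)
    with sup[of 0] show ?thesis unfolding A_def[symmetric] True by simp
  next
    case False
    hence "A / 2 < (SUP n. norm (a n))" using order_trans[OF norm_ge_zero A] unfolding A_def linf_norm_def by simp
    moreover have "bdd_above (range (\<lambda>n. norm (a n)))" using A by (intro bdd_aboveI2) auto
    ultimately have "\<exists>m. A / 2 < norm (a m)" using less_cSUP_iff[of UNIV "\<lambda>n. norm (a n)" "A / 2"] by simp
    then obtain m where "A / 2 < norm (a m)" ..
    hence "A * lower_const \<le> \<delta> m powr \<alpha> * Mp p (1 - \<delta> m) (PhiK K \<nu> \<beta> a)"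
      unfolding lower_const_def by (intro weighted_Mp_PhiK_ge[OF large A]) simp
    also have "\<dots> \<le> Hpia_norm p \<alpha> (PhiK K \<nu> \<beta> a)"
      using sup[of "1 - \<delta> m"] delta_pos[of m] delta_less_1[of m] by simp
    finally show ?thesis unfolding A_def by (simp add: mult.commute)
  qed
qed

lemma PhiK_injective:
  assumes large: "K powr (-\<nu>) \<le> 3 powr \<beta> / 16" "K powr (\<nu> + \<beta>) \<le> 3 powr \<beta> / 16"
    and a: "bounded (range a)" and b: "bounded (range b)"
    and eq: "\<forall>z\<in>ball 0 1. PhiK K \<nu> \<beta> a z = PhiK K \<nu> \<beta> b z"
  shows "a = b"
proof
  fix n
  define d where "d = (\<lambda>n. a n + (-1) * b n)"
  have d: "bounded (range d)" unfolding d_def by (rule bounded_range_add_scaled[OF a b])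
  have "PhiK K \<nu> \<beta> d z = 0" if "z \<in> ball 0 1" for z
    using PhiK_add_scaled[OF a b that, of "-1"] eq that unfolding d_def by simp
  hence "Hpia_norm p \<alpha> (PhiK K \<nu> \<beta> d) = 0" using p_pos by (rule Hpia_norm_eq_0)
  hence "linf_norm d \<le> 0"
    using Hpia_norm_PhiK_ge[OF large d] lower_const_pos by (simp add: mult_le_0_iff)
  hence "norm (d n) \<le> 0" using linf_norm_ge[OF d, of n] by linarith
  thus "a n = b n" unfolding d_def by simp
qed

end

theorem proposition6p7:
  fixes p \<alpha> \<beta> \<nu> :: real
  assumes "0 < p" and "0 < \<alpha>" and "\<beta> * p < -1"
    and "\<nu> = - (\<alpha> + \<beta> + 1 / p)" and "0 < \<nu>"
  shows "\<exists>K0>1. \<forall>K>K0.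
    (\<forall>a. bounded (range a) \<longrightarrow>
        (\<forall>z\<in>ball 0 1. summable (\<lambda>k. a k * fK K \<nu> \<beta> (Suc k) z))
      \<and> in_Hpia p \<alpha> (PhiK K \<nu> \<beta> a))
    \<and> (\<forall>a b c. bounded (range a) \<longrightarrow> bounded (range b) \<longrightarrow>
        (\<forall>z\<in>ball 0 1. PhiK K \<nu> \<beta> (\<lambda>n. a n + c * b n) z
                       = PhiK K \<nu> \<beta> a z + c * PhiK K \<nu> \<beta> b z))
    \<and> (\<forall>a b. bounded (range a) \<longrightarrow> bounded (range b) \<longrightarrow>
        (\<forall>z\<in>ball 0 1. PhiK K \<nu> \<beta> a z = PhiK K \<nu> \<beta> b z) \<longrightarrow> a = b)
    \<and> (\<exists>c C. 0 < c \<and> 0 < C \<and> (\<forall>a. bounded (range a) \<longrightarrow>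
        c * linf_norm a \<le> Hpia_norm p \<alpha> (PhiK K \<nu> \<beta> a)
        \<and> Hpia_norm p \<alpha> (PhiK K \<nu> \<beta> a) \<le> C * linf_norm a))"
proof -
  have "\<beta> * p < 0" using assms(3) by linarith
  hence \<beta>: "\<beta> < 0" using assms(1) by (simp add: mult_less_0_iff)
  have "0 < 1 / p" using assms(1) by simp
  hence \<nu>\<beta>: "\<nu> + \<beta> < 0" using assms(2,4) by linarith
  have "\<forall>\<^sub>F K in at_top. 1 < K \<and> K powr (-\<nu>) \<le> 3 powr \<beta> / 16 \<and> K powr (\<nu> + \<beta>) \<le> 3 powr \<beta> / 16"
    using eventually_gt_at_top[of 1] powr_neg_le_eventually[of "-\<nu>" "3 powr \<beta> / 16"]
      powr_neg_le_eventually[OF \<nu>\<beta>, of "3 powr \<beta> / 16"] assms(5)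
    by (auto intro: eventually_conj)
  then obtain K0 where K0: "\<And>K. K0 < K \<Longrightarrow>
      1 < K \<and> K powr (-\<nu>) \<le> 3 powr \<beta> / 16 \<and> K powr (\<nu> + \<beta>) \<le> 3 powr \<beta> / 16"
    by (auto simp: eventually_at_top_dense)
  show ?thesis
    apply (rule exI[of _ "max 2 K0"], intro conjI[of "1 < max 2 K0"] allI impI)
     apply simp
    subgoal for K
    proof -
      assume "max 2 K0 < K"
      with K0[of K] have K: "1 < K"
        and large: "K powr (-\<nu>) \<le> 3 powr \<beta> / 16" "K powr (\<nu> + \<beta>) \<le> 3 powr \<beta> / 16" by auto
      interpret lacunary_Hpia K \<nu> \<beta> p \<alpha> using K assms \<beta> \<nu>\<beta> by unfold_locales auto
      show ?thesis
        apply (intro conjI)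
        subgoal using summable_PhiK_terms in_Hpia_PhiK by blast
        subgoal using PhiK_add_scaled by blast
        subgoal using PhiK_injective[OF large] by blast
        subgoal using Hpia_norm_PhiK_ge[OF large] Hpia_norm_PhiK_le lower_const_pos upper_const_pos by blast
        done
    qed
    done
qed

end
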